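(* The irreducible polynomials over the tropical hyperfield $\mathbb T$ are precisely the polynomials of degree $1$, and the set of polynomials over $\mathbb T$ has the unique factorization property.
   Context: The tropical hyperfield $\mathbb T$ is the set $\mathbb R_{\ge0}$ with usual multiplication and hyperaddition $a\boxplus b=\{\max\{a,b\}\}$ if $a\ne b$ and $a\boxplus a=[0,a]$; equivalently $c\in a\boxplus b$ iff the maximum of $a,b,c$ is attained at least twice. Here $-a=a$. Iterated sums: $\boxplus_{i=1}^n a_i=\bigcup_{b\in\boxplus_{i=1}^{n-1}a_i} b\boxplus a_n$. A polynomial over $\mathbb T$ is a finitely supported sequence $(c_i)$ in $\mathbb T$, written $\sum c_iT^i$, with degree the largest $k$ with $c_k\ne0$. Hyperproduct: $p\boxdot q=\{\sum e_iT^i : e_i\in \boxplus_{k+l=i} c_kd_l\}$ for $p=\sum c_iT^i,q=\sum d_iT^i$, and $\boxdot_{i=1}^n q_i=\bigcup_{r\in\boxdot_{i=1}^{n-1}q_i} r\boxdot q_n$. $p\sim q$ means $p\in a\boxdot q$ for some $a\neq0$. $p$ is irreducible if $\deg p\ge1$ and $p\in q_1\boxdot q_2$ implies $p\sim q_1$ or $p\sim q_2$. The unique factorization property: whenever $p\in q_1\boxdot\cdots\boxdot q_n$ and $p\in q'_1\boxdot\cdots\boxdot q'_m$ with all factors irreducible, then $n=m$ and $q_i\sim q'_{\sigma(i)}$ for some permutation $\sigma$. *)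

theory Defs
  imports Main "HOL.Real"
begin

text \<open>Tropical hyperfield: elements are nonnegative reals. Hyperaddition.\<close>
definition thadd :: "real \<Rightarrow> real \<Rightarrow> real set" where
  "thadd a b = (if a \<noteq> b then {max a b} else {c. 0 \<le> c \<and> c \<le> a})"

text \<open>Iterated hypersum (left-nested); the empty sum is {0}, so that a singleton sum is {a}.\<close>
definition thsum_list :: "real list \<Rightarrow> real set" where
  "thsum_list xs = foldl (\<lambda>S a. \<Union>b\<in>S. thadd b a) {0} xs"

definition tpoly :: "(nat \<Rightarrow> real) \<Rightarrow> bool" where
  "tpoly p \<longleftrightarrow> (\<forall>i. 0 \<le> p i) \<and> finite {i. p i \<noteq> 0}"

definition tdeg :: "(nat \<Rightarrow> real) \<Rightarrow> nat" where
  "tdeg p = (if (\<forall>i. p i = 0) then 0 else Max {i. p i \<noteq> 0})"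

definition tconst :: "real \<Rightarrow> nat \<Rightarrow> real" where
  "tconst a = (\<lambda>i. if i = 0 then a else 0)"

definition thprod :: "(nat \<Rightarrow> real) \<Rightarrow> (nat \<Rightarrow> real) \<Rightarrow> (nat \<Rightarrow> real) set" where
  "thprod p q = {e. tpoly e \<and>
     (\<forall>i. e i \<in> thsum_list (map (\<lambda>k. p k * q (i - k)) [0..<Suc i]))}"

fun thprod_list :: "(nat \<Rightarrow> real) list \<Rightarrow> (nat \<Rightarrow> real) set" where
  "thprod_list [] = {tconst 1}"
| "thprod_list (q # qs) = foldl (\<lambda>S r. \<Union>s\<in>S. thprod s r) {q} qs"

definition tassoc :: "(nat \<Rightarrow> real) \<Rightarrow> (nat \<Rightarrow> real) \<Rightarrow> bool" where
  "tassoc p q \<longleftrightarrow> (\<exists>a. 0 \<le> a \<and> a \<noteq> 0 \<and> p \<in> thprod (tconst a) q)"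

definition tirred :: "(nat \<Rightarrow> real) \<Rightarrow> bool" where
  "tirred p \<longleftrightarrow> tpoly p \<and> tdeg p \<ge> 1 \<and>
     (\<forall>q1 q2. tpoly q1 \<longrightarrow> tpoly q2 \<longrightarrow> p \<in> thprod q1 q2 \<longrightarrow> tassoc p q1 \<or> tassoc p q2)"

end

theory Submission
  imports Defs Complex_Main "HOL-Combinatorics.List_Permutation"
begin

text \<open>Degrees add under hypermultiplication, so polynomials of degree 1 are irreducible. Conversely a
  polynomial of degree \<open>n \<ge> 2\<close> splits off the linear factor \<open>T\<close> if its constant coefficient vanishes,
  and otherwise \<open>T + r\<close> for its largest tropical root \<open>r\<close>. For uniqueness, every element \<open>p\<close> of a
  hyperproduct of linear factors \<open>a\<^sub>i T + a\<^sub>i \<rho>\<^sub>i\<close> has the tropical function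
  \<open>max\<^sub>j p\<^sub>j t\<^sup>j = (\<Prod> a\<^sub>i) \<Prod> max t \<rho>\<^sub>i\<close>, which determines the multiset of roots \<open>\<rho>\<^sub>i\<close>;
  linear factors with the same root are associates.\<close>

lemma thadd_commute: "thadd a b = thadd b a"
  by (auto simp: thadd_def max.commute)

lemma thadd_zero_right: "0 \<le> a \<Longrightarrow> thadd a 0 = {a}"
  by (auto simp: thadd_def max_def)

lemma thadd_less_left: "a < b \<Longrightarrow> thadd a b = {b}"
  and thadd_less_right: "b < a \<Longrightarrow> thadd a b = {a}"
  by (auto simp: thadd_def max_def)

lemma thadd_le_max: "c \<in> thadd a b \<Longrightarrow> c \<le> max a b"
  by (auto simp: thadd_def split: if_splits)

lemma thadd_scale: "0 < t \<Longrightarrow> c \<in> thadd a b \<Longrightarrow> t * c \<in> thadd (t * a) (t * b)"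
  by (auto simp: thadd_def max_mult_distrib_left split: if_splits)

lemma thsum_list_snoc: "thsum_list (xs @ [a]) = (\<Union>b\<in>thsum_list xs. thadd b a)"
  by (simp add: thsum_list_def)

lemma thsum_list_two_terms:
  assumes nonneg: "\<And>i. 0 \<le> f i" and zero: "\<And>i. i < n \<Longrightarrow> i \<noteq> k \<Longrightarrow> i \<noteq> l \<Longrightarrow> f i = 0"
    and "k < l"
  shows "thsum_list (map f [0..<n]) =
    (if l < n then thadd (f k) (f l) else if k < n then {f k} else {0})"
  using zero
proof (induction n)
  case 0
  then show ?case by (simp add: thsum_list_def)
next
  case (Suc n)
  then have IH: "thsum_list (map f [0..<n]) =
      (if l < n then thadd (f k) (f l) else if k < n then {f k} else {0})"
    by auto
  have sum_nonneg: "0 \<le> b" if "b \<in> thsum_list (map f [0..<n])" for b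
    using that nonneg by (auto simp: IH thadd_def max_def split: if_splits)
  have snoc: "thsum_list (map f [0..<Suc n]) = (\<Union>b\<in>thsum_list (map f [0..<n]). thadd b (f n))"
    by (simp add: thsum_list_snoc)
  show ?case
  proof (cases "n = k \<or> n = l")
    case True
    have "thadd 0 (f k) = {f k}"
      using thadd_zero_right[OF nonneg] thadd_commute by metis
    then show ?thesis using True snoc IH \<open>k < l\<close> by auto
  next
    case False
    then have "f n = 0" using Suc.prems by auto
    then show ?thesis using False snoc sum_nonneg IH by (simp add: thadd_zero_right)
  qed
qed

lemma tpoly_nonneg: "tpoly p \<Longrightarrow> 0 \<le> p i"
  by (simp add: tpoly_def)

lemma tpolyI:
  assumes "\<And>i. 0 \<le> p i" and "\<And>i. n \<le> i \<Longrightarrow> p i = 0"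
  shows "tpoly p"
proof -
  have "{i. p i \<noteq> 0} \<subseteq> {..<n}"
    using assms(2) not_le by auto
  then show ?thesis
    using assms(1) finite_subset by (auto simp: tpoly_def)
qed

lemma tpoly_scale: "tpoly p \<Longrightarrow> 0 \<le> c \<Longrightarrow> tpoly (\<lambda>i. c * p i)"
  unfolding tpoly_def by (auto intro: finite_subset[of _ "{i. p i \<noteq> 0}"])

lemma tdeg_eqI:
  assumes "tpoly p" "p d \<noteq> 0" "\<And>i. d < i \<Longrightarrow> p i = 0"
  shows "tdeg p = d"
proof -
  have "finite {i. p i \<noteq> 0}" using assms(1) by (simp add: tpoly_def)
  then have "Max {i. p i \<noteq> 0} = d"
    by (rule Max_eqI) (use assms(2,3) not_less in auto)
  then show ?thesis using assms(2) by (auto simp: tdeg_def)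
qed

lemma tdeg_leading:
  assumes "tpoly p" "\<exists>i. p i \<noteq> 0"
  shows "p (tdeg p) \<noteq> 0" and "\<And>i. tdeg p < i \<Longrightarrow> p i = 0"
proof -
  have fin: "finite {i. p i \<noteq> 0}" using assms(1) by (simp add: tpoly_def)
  have ne: "{i. p i \<noteq> 0} \<noteq> {}" using assms(2) by auto
  have deg: "tdeg p = Max {i. p i \<noteq> 0}" using assms(2) by (auto simp: tdeg_def)
  show "p (tdeg p) \<noteq> 0" using Max_in[OF fin ne] deg by simp
  show "p i = 0" if "tdeg p < i" for i using Max_ge[OF fin, of i] deg that by fastforce
qed

lemma tdeg_pos_nonzero: "0 < tdeg p \<Longrightarrow> \<exists>i. p i \<noteq> 0"
  by (auto simp: tdeg_def split: if_splits)

lemma tdeg_0_eq_tconst: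
  assumes "tpoly p" "tdeg p = 0"
  shows "p = tconst (p 0)"
proof (cases "\<exists>i. p i \<noteq> 0")
  case True
  then show ?thesis using tdeg_leading[OF assms(1) True] assms(2) by (auto simp: tconst_def)
qed (auto simp: tconst_def)

lemma thprod_coeff: "e \<in> thprod p q \<Longrightarrow> e i \<in> thsum_list (map (\<lambda>k. p k * q (i - k)) [0..<Suc i])"
  by (simp add: thprod_def)

lemma thprod_tpoly: "e \<in> thprod p q \<Longrightarrow> tpoly e"
  by (simp add: thprod_def)

lemma thprod_tconst_left:
  assumes "tpoly q" "0 \<le> c"
  shows "thprod (tconst c) q = {\<lambda>i. c * q i}"
proof -
  have "thsum_list (map (\<lambda>k. tconst c k * q (i - k)) [0..<Suc i]) = {c * q i}" for i
    by (subst thsum_list_two_terms[where k=0 and l="Suc i"])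
       (use assms in \<open>auto simp: tconst_def tpoly_nonneg\<close>)
  then show ?thesis using tpoly_scale[OF assms] by (auto simp: thprod_def)
qed

lemma thprod_tconst_right:
  assumes "tpoly p" "0 \<le> c" "e \<in> thprod p (tconst c)"
  shows "e = (\<lambda>i. c * p i)"
proof
  fix i
  have "e i \<in> thsum_list (map (\<lambda>k. p k * tconst c (i - k)) [0..<Suc i])"
    using thprod_coeff[OF assms(3)] .
  also have "\<dots> = {p i * c}"
    by (subst thsum_list_two_terms[where k=i and l="Suc i"])
       (use assms in \<open>auto simp: tconst_def tpoly_nonneg\<close>)
  finally show "e i = c * p i" by simp
qed

lemma thprod_zero:
  assumes "e \<in> thprod p q" "(\<forall>i. p i = 0) \<or> (\<forall>i. q i = 0)"
  shows "e i = 0"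
proof -
  have "e i \<in> thsum_list (map (\<lambda>k. p k * q (i - k)) [0..<Suc i])"
    using thprod_coeff[OF assms(1)] .
  also have "\<dots> = {0}"
    by (subst thsum_list_two_terms[where k="Suc i" and l="Suc (Suc i)"]) (use assms(2) in auto)
  finally show ?thesis by simp
qed

lemma tdeg_thprod:
  assumes p: "tpoly p" "\<exists>i. p i \<noteq> 0" and q: "tpoly q" "\<exists>i. q i \<noteq> 0" and e: "e \<in> thprod p q"
  shows "tdeg e = tdeg p + tdeg q"
proof (rule tdeg_eqI[OF thprod_tpoly[OF e]])
  note lp = tdeg_leading[OF p] and lq = tdeg_leading[OF q]
  let ?d = "tdeg p + tdeg q"
  have nonneg: "0 \<le> p k * q (i - k)" for k i using p q by (simp add: tpoly_nonneg)
  have "e ?d \<in> thsum_list (map (\<lambda>k. p k * q (?d - k)) [0..<Suc ?d])"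
    using thprod_coeff[OF e] .
  also have "\<dots> = {p (tdeg p) * q (tdeg q)}"
  proof (subst thsum_list_two_terms[where k="tdeg p" and l="Suc ?d", OF nonneg])
    fix k assume "k < Suc ?d" "k \<noteq> tdeg p"
    then have "tdeg p < k \<or> tdeg q < ?d - k" by auto
    then show "p k * q (?d - k) = 0" using lp lq by auto
  qed auto
  finally show "e ?d \<noteq> 0" using lp lq by simp
  fix i assume i: "?d < i"
  have "e i \<in> thsum_list (map (\<lambda>k. p k * q (i - k)) [0..<Suc i])"
    using thprod_coeff[OF e] .
  also have "\<dots> = {0}"
  proof (subst thsum_list_two_terms[where k="Suc i" and l="Suc (Suc i)", OF nonneg])
    fix k assume "k < Suc i"
    then have "tdeg p < k \<or> tdeg q < i - k" using i by auto
    then show "p k * q (i - k) = 0" using lp lq by auto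
  qed auto
  finally show "e i = 0" by simp
qed

lemma tassocI:
  assumes "tpoly q" "0 < c" "p = (\<lambda>i. c * q i)"
  shows "tassoc p q"
  unfolding tassoc_def using assms thprod_tconst_left[OF assms(1), of c] by (auto intro!: exI[of _ c])

lemma tassoc_tdeg:
  assumes "tassoc p q" "tpoly q"
  shows "tdeg p = tdeg q"
proof -
  obtain c where "0 < c" "p \<in> thprod (tconst c) q"
    using assms(1) less_eq_real_def unfolding tassoc_def by blast
  then show ?thesis using thprod_tconst_left[OF assms(2)] by (auto simp: tdeg_def)
qed

lemma tirred_if_tdeg_1:
  assumes p: "tpoly p" "tdeg p = 1"
  shows "tirred p"
  unfolding tirred_def
proof (intro conjI allI impI)
  fix q1 q2 assume q: "tpoly q1" "tpoly q2" and e: "p \<in> thprod q1 q2"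
  have "\<exists>i. p i \<noteq> 0" using p(2) by (simp add: tdeg_pos_nonzero)
  then have nz: "\<exists>i. q1 i \<noteq> 0" "\<exists>i. q2 i \<noteq> 0" using thprod_zero[OF e] by blast+
  have "tdeg q1 = 0 \<or> tdeg q2 = 0" using tdeg_thprod[OF q(1) nz(1) q(2) nz(2) e] p(2) by arith
  then show "tassoc p q1 \<or> tassoc p q2"
  proof
    assume "tdeg q1 = 0"
    then have "q1 = tconst (q1 0)" "0 < q1 0"
      using tdeg_0_eq_tconst[OF q(1)] tdeg_leading(1)[OF q(1) nz(1)] tpoly_nonneg[OF q(1)]
      by (auto simp: less_le)
    then have "p = (\<lambda>i. q1 0 * q2 i)" using e thprod_tconst_left[OF q(2)] by (metis less_imp_le singletonD)
    then show ?thesis using tassocI[OF q(2) \<open>0 < q1 0\<close>] by blast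
  next
    assume "tdeg q2 = 0"
    then have "q2 = tconst (q2 0)" "0 < q2 0"
      using tdeg_0_eq_tconst[OF q(2)] tdeg_leading(1)[OF q(2) nz(2)] tpoly_nonneg[OF q(2)]
      by (auto simp: less_le)
    then have "p = (\<lambda>i. q2 0 * q1 i)" using e thprod_tconst_right[OF q(1)] by (metis less_imp_le)
    then show ?thesis using tassocI[OF q(1) \<open>0 < q2 0\<close>] by blast
  qed
qed (use p in auto)

definition tlinear :: "(nat \<Rightarrow> real) \<Rightarrow> bool" where
  "tlinear q \<longleftrightarrow> tpoly q \<and> 0 < q 1 \<and> (\<forall>k\<ge>2. q k = 0)"

lemma tlinear_iff_tdeg_1:
  assumes "tpoly q"
  shows "tlinear q \<longleftrightarrow> tdeg q = 1"
proof
  assume "tlinear q"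
  then show "tdeg q = 1" by (intro tdeg_eqI) (auto simp: tlinear_def)
next
  assume deg: "tdeg q = 1"
  then have "\<exists>i. q i \<noteq> 0" by (simp add: tdeg_pos_nonzero)
  then show "tlinear q"
    using tdeg_leading[OF assms] deg assms tpoly_nonneg[OF assms, of 1] by (auto simp: tlinear_def less_le)
qed

definition tshift :: "(nat \<Rightarrow> real) \<Rightarrow> nat \<Rightarrow> real" where
  "tshift s i = (case i of 0 \<Rightarrow> 0 | Suc k \<Rightarrow> s k)"

lemma tshift_simps [simp]: "tshift s 0 = 0" "tshift s (Suc k) = s k"
  by (simp_all add: tshift_def)

lemma thprod_tlinear:
  assumes q: "tlinear q" and s: "\<And>k. 0 \<le> s k"
  shows "e \<in> thprod s q \<longleftrightarrow> tpoly e \<and> (\<forall>i. e i \<in> thadd (tshift s i * q 1) (s i * q 0))"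
proof -
  have nonneg: "0 \<le> s k * q (i - k)" for k i
    using q s by (simp add: tlinear_def tpoly_nonneg)
  have "thsum_list (map (\<lambda>k. s k * q (i - k)) [0..<Suc i]) = thadd (tshift s i * q 1) (s i * q 0)" for i
  proof (cases i)
    case 0
    then show ?thesis
      using thadd_zero_right[of "s 0 * q 0"] thadd_commute nonneg[of 0 0] by (simp add: thsum_list_def)
  next
    case (Suc j)
    show ?thesis
      by (subst thsum_list_two_terms[where k=j and l=i, OF nonneg])
         (use q Suc in \<open>auto simp: tlinear_def\<close>)
  qed
  then show ?thesis by (simp add: thprod_def)
qed

lemma mem_thadd_max: "0 \<le> a \<Longrightarrow> a \<in> thadd b (max b a)"
  by (cases "b < a") (auto simp: thadd_def max_def)

definition tmonic_linear :: "real \<Rightarrow> nat \<Rightarrow> real" where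
  "tmonic_linear r i = (if i = 0 then r else if i = 1 then 1 else 0)"

lemma tlinear_tmonic_linear: "0 \<le> r \<Longrightarrow> tlinear (tmonic_linear r)"
  by (auto simp: tlinear_def tmonic_linear_def intro: tpolyI[of _ 2])

lemma tdivision_by_T:
  assumes p: "tpoly p" "tdeg p = n" "0 < n" "p n \<noteq> 0" "p 0 = 0"
  defines "s \<equiv> \<lambda>i. p (Suc i)"
  shows "p \<in> thprod s (tmonic_linear 0)" and "tpoly s" and "tdeg s = n - 1"
proof -
  have above: "p i = 0" if "n < i" for i
    using tdeg_leading(2)[OF p(1)] p(2,4) that by blast
  show "tpoly s"
    using above by (intro tpolyI[of _ n]) (auto simp: s_def tpoly_nonneg[OF p(1)])
  then show "tdeg s = n - 1"
    using above p(3,4) by (intro tdeg_eqI) (auto simp: s_def)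
  have "p i \<in> thadd (tshift s i) 0" for i
    using p thadd_zero_right[OF tpoly_nonneg] thadd_zero_right[of 0] by (cases i) (auto simp: s_def)
  then show "p \<in> thprod s (tmonic_linear 0)"
    using p(1) by (subst thprod_tlinear) (auto simp: tlinear_tmonic_linear tmonic_linear_def s_def tpoly_nonneg)
qed

primrec prefix_max :: "(nat \<Rightarrow> real) \<Rightarrow> real \<Rightarrow> nat \<Rightarrow> real" where
  "prefix_max p r 0 = 0"
| "prefix_max p r (Suc k) = max (prefix_max p r k) (p k * r ^ k)"

lemma prefix_max_ge: "j < k \<Longrightarrow> p j * r ^ j \<le> prefix_max p r k"
  by (induction k) (auto simp: less_Suc_eq max_def)

lemma prefix_max_le: "0 \<le> B \<Longrightarrow> (\<And>j. j < k \<Longrightarrow> p j * r ^ j \<le> B) \<Longrightarrow> prefix_max p r k \<le> B"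
  by (induction k) auto

lemma prefix_max_nonneg: "0 \<le> prefix_max p r k"
  by (induction k) auto

lemma largest_tropical_root:
  fixes p :: "nat \<Rightarrow> real"
  assumes n: "0 < n" and pn: "0 < p n" and p0: "0 < p 0" and nonneg: "\<And>i. 0 \<le> p i"
  shows "\<exists>r>0. (\<forall>j<n. p j * r ^ j \<le> p n * r ^ n) \<and> (\<exists>j<n. p j * r ^ j = p n * r ^ n)"
proof -
  define g :: "nat \<Rightarrow> real" where "g j = root (n - j) (p j / p n)" for j
  define r where "r = Max (g ` {..<n})"
  have fin: "finite (g ` {..<n})" and ne: "g ` {..<n} \<noteq> {}" using n by auto
  have g_le: "g j \<le> r" if "j < n" for j using that fin unfolding r_def by auto
  obtain j0 where j0: "j0 < n" "r = g j0" using Max_in[OF fin ne] unfolding r_def by auto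
  have g_pow: "g j ^ (n - j) = p j / p n" if "j < n" for j
    unfolding g_def using that nonneg pn by (intro real_root_pow_pos2) auto
  have g_nonneg: "0 \<le> g j" for j
    unfolding g_def using nonneg[of j] pn by (intro real_root_ge_zero) auto
  have "0 < g 0" unfolding g_def using n p0 pn by auto
  then have r_pos: "0 < r" using g_le[OF n] by auto
  have scale: "p j * r ^ j = p n * r ^ n \<longleftrightarrow> p j / p n = r ^ (n - j)"
    and scale_le: "p j * r ^ j \<le> p n * r ^ n \<longleftrightarrow> p j / p n \<le> r ^ (n - j)" if "j < n" for j
  proof -
    have "p n * r ^ n = (p n * r ^ (n - j)) * r ^ j"
      using that by (simp add: mult.assoc power_add[symmetric])
    then show "p j * r ^ j = p n * r ^ n \<longleftrightarrow> p j / p n = r ^ (n - j)"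
      and "p j * r ^ j \<le> p n * r ^ n \<longleftrightarrow> p j / p n \<le> r ^ (n - j)"
      using r_pos pn by (simp_all add: field_simps)
  qed
  have "p j * r ^ j \<le> p n * r ^ n" if "j < n" for j
    using scale_le[OF that] g_pow[OF that] power_mono[OF g_le[OF that] g_nonneg, of "n - j"] by simp
  moreover have "p j0 * r ^ j0 = p n * r ^ n"
    using scale[OF j0(1)] g_pow[OF j0(1)] j0(2) by simp
  ultimately show ?thesis using r_pos j0(1) by blast
qed

text \<open>Tropical synthetic division by \<open>T + r\<close>: the quotient satisfies \<open>r s\<^sub>i = max s\<^sub>i\<^sub>-\<^sub>1 p\<^sub>i\<close>,
  so \<open>p\<^sub>i \<in> s\<^sub>i\<^sub>-\<^sub>1 \<boxplus> r s\<^sub>i\<close>; the last coefficient needs \<open>s\<^sub>n\<^sub>-\<^sub>1 = p\<^sub>n\<close>.\<close>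
lemma tsynthetic_division_coeff:
  assumes nonneg: "\<And>i. 0 \<le> p i" and r: "0 < r" and top: "prefix_max p r n = p n * r ^ n"
    and above: "\<And>i. n < i \<Longrightarrow> p i = 0"
  defines "s \<equiv> \<lambda>k. if k < n then prefix_max p r (Suc k) / r ^ Suc k else 0"
  shows "p i \<in> thadd (tshift s i) (s i * r)"
proof -
  have shift: "tshift s i = prefix_max p r i / r ^ i" if "i \<le> n"
    using that by (cases i) (auto simp: s_def)
  consider "i < n" | "i = n" | "n < i" by linarith
  then show ?thesis
  proof cases
    case 1
    have "s i * r = max (prefix_max p r i) (p i * r ^ i) / r ^ i"
      using 1 r by (simp add: s_def)
    also have "\<dots> = max (prefix_max p r i / r ^ i) (p i)"
      using r by (simp add: max_divide_distrib_right)
    finally show ?thesis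
      using mem_thadd_max[OF nonneg] shift 1 by simp
  next
    case 2
    then show ?thesis using shift top r thadd_zero_right nonneg by (simp add: s_def)
  next
    case 3
    then show ?thesis using above[OF 3] by (cases i) (auto simp: s_def thadd_zero_right)
  qed
qed

lemma tdivision_by_largest_root:
  assumes p: "tpoly p" "tdeg p = n" "0 < n" "p n \<noteq> 0"
    and r: "0 < r" "\<And>j. j < n \<Longrightarrow> p j * r ^ j \<le> p n * r ^ n" "j0 < n" "p j0 * r ^ j0 = p n * r ^ n"
  defines "s \<equiv> \<lambda>k. if k < n then prefix_max p r (Suc k) / r ^ Suc k else 0"
  shows "p \<in> thprod s (tmonic_linear r)" and "tpoly s" and "tdeg s = n - 1"
proof -
  have s_nonneg: "0 \<le> s k" for k
    using r(1) prefix_max_nonneg[of p r "Suc k"] by (simp add: s_def del: prefix_max.simps)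
  have top: "prefix_max p r n = p n * r ^ n"
  proof (rule antisym)
    show "prefix_max p r n \<le> p n * r ^ n"
      using r(1,2) tpoly_nonneg[OF p(1)] by (intro prefix_max_le) auto
    show "p n * r ^ n \<le> prefix_max p r n"
      using prefix_max_ge[OF r(3), of p r] r(4) by simp
  qed
  have above: "p i = 0" if "n < i" for i
    using tdeg_leading(2)[OF p(1)] p(2,4) that by blast
  have "p i \<in> thadd (tshift s i) (s i * r)" for i
    unfolding s_def by (rule tsynthetic_division_coeff[OF tpoly_nonneg[OF p(1)] r(1) top above])
  then show "p \<in> thprod s (tmonic_linear r)"
    using s_nonneg p(1) r(1) by (subst thprod_tlinear) (auto simp: tlinear_tmonic_linear tmonic_linear_def)
  show "tpoly s"
    using s_nonneg by (intro tpolyI[of _ n]) (auto simp: s_def)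
  moreover have "s (n - 1) = p n"
    using top p(3) r(1) by (cases n) (auto simp: s_def)
  ultimately show "tdeg s = n - 1"
    using p(3,4) by (intro tdeg_eqI) (auto simp: s_def)
qed

lemma tlinear_factor_exists:
  assumes p: "tpoly p" "1 \<le> tdeg p"
  obtains s q where "p \<in> thprod s q" "tlinear q" "tpoly s" "tdeg s = tdeg p - 1"
proof -
  define n where "n = tdeg p"
  have "\<exists>i. p i \<noteq> 0" using p(2) tdeg_pos_nonzero by simp
  then have pn: "0 < p n" "p n \<noteq> 0"
    using tdeg_leading(1)[OF p(1)] tpoly_nonneg[OF p(1)] by (auto simp: n_def less_le)
  have n: "0 < n" "tdeg p = n" using p(2) by (simp_all add: n_def)
  show ?thesis
  proof (cases "p 0 = 0")
    case True
    note f = tdivision_by_T[OF p(1) n(2,1) pn(2) True]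
    show ?thesis by (rule that[OF f(1) tlinear_tmonic_linear f(2)]) (simp_all add: f(3) n(2))
  next
    case False
    then have "0 < p 0" using tpoly_nonneg[OF p(1)] by (simp add: less_le)
    then obtain r j0 where "0 < r" "\<forall>j<n. p j * r ^ j \<le> p n * r ^ n"
      "j0 < n" "p j0 * r ^ j0 = p n * r ^ n"
      using largest_tropical_root[of n p] n(1) pn(1) tpoly_nonneg[OF p(1)] by blast
    then show ?thesis
      using tdivision_by_largest_root[OF p(1) n(2,1) pn(2), of r j0] tlinear_tmonic_linear[of r] that n(2) by simp
  qed
qed

lemma tdeg_1_if_tirred:
  assumes "tirred p"
  shows "tdeg p = 1"
proof -
  have p: "tpoly p" "1 \<le> tdeg p" using assms by (simp_all add: tirred_def)
  obtain s q where factor: "p \<in> thprod s q" "tlinear q" "tpoly s" "tdeg s = tdeg p - 1"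
    using tlinear_factor_exists[OF p] .
  then have "tpoly q" "tdeg q = 1" using tlinear_iff_tdeg_1 by (auto simp: tlinear_def)
  have "tassoc p s \<or> tassoc p q"
    using assms factor \<open>tpoly q\<close> by (simp add: tirred_def)
  then have "tdeg p = tdeg s \<or> tdeg p = tdeg q"
    using tassoc_tdeg factor(3) \<open>tpoly q\<close> by blast
  then show ?thesis using factor(4) p(2) \<open>tdeg q = 1\<close> by linarith
qed

lemma tirred_iff_tdeg_1: "tpoly p \<Longrightarrow> tirred p \<longleftrightarrow> tdeg p = 1"
  using tirred_if_tdeg_1 tdeg_1_if_tirred by blast

definition root_prod :: "real multiset \<Rightarrow> real \<Rightarrow> real" where
  "root_prod R t = (\<Prod>\<rho>\<in>#R. max t \<rho>)"

lemma root_prod_empty [simp]: "root_prod {#} t = 1"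
  and root_prod_add_mset [simp]: "root_prod (add_mset \<rho> R) t = max t \<rho> * root_prod R t"
  by (simp_all add: root_prod_def)

lemma root_prod_ge_power: "0 < t \<Longrightarrow> t ^ size R \<le> root_prod R t"
  by (induction R) (auto intro: mult_mono)

lemma root_prod_pos: "0 < t \<Longrightarrow> 0 < root_prod R t"
  using root_prod_ge_power[of t R] zero_less_power[of t "size R"] by linarith

lemma root_prod_above_roots: "\<forall>\<rho>\<in>#R. \<rho> \<le> t \<Longrightarrow> root_prod R t = t ^ size R"
  by (induction R) (simp_all add: max_absorb1)

definition troot :: "(nat \<Rightarrow> real) \<Rightarrow> real" where
  "troot q = q 0 / q 1"

text \<open>The tropical function \<open>t \<mapsto> max\<^sub>j s\<^sub>j t\<^sup>j\<close> of \<open>s\<close> is \<open>t \<mapsto> c \<Prod>\<^sub>\<rho>\<^sub>\<in>\<^sub>R max t \<rho>\<close>: the latter bounds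
  every term, and away from \<open>R\<close> some term attains it.\<close>
definition trop_factored :: "(nat \<Rightarrow> real) \<Rightarrow> real \<Rightarrow> real multiset \<Rightarrow> bool" where
  "trop_factored s c R \<longleftrightarrow> (\<forall>j. 0 \<le> s j) \<and> 0 < c \<and>
     (\<forall>j t. 0 < t \<longrightarrow> s j * t ^ j \<le> c * root_prod R t) \<and>
     (\<forall>t. 0 < t \<longrightarrow> t \<notin># R \<longrightarrow> (\<exists>j. s j * t ^ j = c * root_prod R t))"

lemma trop_factored_tconst_1: "trop_factored (tconst 1) 1 {#}"
  by (auto simp: trop_factored_def tconst_def intro: exI[of _ 0])

lemma tlinear_thprod_term_le:
  assumes t: "0 < t" and a: "0 < a" and \<rho>: "0 \<le> \<rho>"
    and s: "\<And>j. 0 \<le> s j" "\<And>j. s j * t ^ j \<le> M"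
    and e: "e i \<in> thadd (tshift s i * a) (s i * (a * \<rho>))"
  shows "e i * t ^ i \<le> a * (max t \<rho> * M)"
proof -
  have M: "0 \<le> M" using s(1)[of 0] s(2)[of 0] by simp
  have "e i * t ^ i \<le> max (tshift s i * a) (s i * (a * \<rho>)) * t ^ i"
    using thadd_le_max[OF e] t by (simp add: mult_right_mono)
  also have "\<dots> = a * max (t * (tshift s i * t ^ (i - 1))) (\<rho> * (s i * t ^ i))"
    using a t by (cases i) (simp_all add: max_mult_distrib_left max_mult_distrib_right ac_simps)
  also have "\<dots> \<le> a * (max t \<rho> * M)"
  proof (intro mult_left_mono max.boundedI)
    have "tshift s i * t ^ (i - 1) \<le> M" using s M by (cases i) auto
    then show "t * (tshift s i * t ^ (i - 1)) \<le> max t \<rho> * M"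
      using s(1) t by (cases i) (auto intro: mult_mono)
    show "\<rho> * (s i * t ^ i) \<le> max t \<rho> * M"
      using s t \<rho> by (intro mult_mono) auto
  qed (use a in simp)
  finally show ?thesis .
qed

text \<open>If the maximum \<open>M\<close> of the terms \<open>s\<^sub>k t\<^sup>k\<close> is attained at \<open>k = j\<close>, then one summand of the
  coefficient \<open>j + 1\<close> (if \<open>\<rho> < t\<close>) or \<open>j\<close> (if \<open>t < \<rho>\<close>) strictly dominates the other.\<close>
lemma tlinear_thprod_term_attained:
  assumes t: "0 < t" and a: "0 < a" and \<rho>: "0 \<le> \<rho>" "\<rho> \<noteq> t"
    and s: "\<And>j. s j * t ^ j \<le> M" "s j * t ^ j = M" "0 < M"
    and e: "\<And>i. e i \<in> thadd (tshift s i * a) (s i * (a * \<rho>))"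
  obtains i where "e i * t ^ i = a * (max t \<rho> * M)"
proof -
  have coeff: "e i * t ^ i \<in> thadd (a * (tshift s i * t ^ i)) (a * \<rho> * (s i * t ^ i))" for i
    using thadd_scale[OF zero_less_power[OF t] e] by (simp add: ac_simps)
  consider "\<rho> < t" | "t < \<rho>" using \<rho>(2) by fastforce
  then show ?thesis
  proof cases
    case 1
    have "a * \<rho> * (s (Suc j) * t ^ Suc j) \<le> a * \<rho> * M"
      using s(1)[of "Suc j"] a \<rho>(1) by (intro mult_left_mono) auto
    also have "\<dots> < a * (tshift s (Suc j) * t ^ Suc j)"
      using 1 s(2,3) a by (simp add: ac_simps)
    finally have "e (Suc j) * t ^ Suc j = a * (tshift s (Suc j) * t ^ Suc j)"
      using coeff[of "Suc j"] by (simp add: thadd_less_right)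
    also have "\<dots> = a * (max t \<rho> * M)"
      using 1 s(2) by (simp add: ac_simps)
    finally show ?thesis by (rule that)
  next
    case 2
    have "a * (tshift s j * t ^ j) \<le> a * (t * M)"
      using s(1)[of "j - 1"] a t by (cases j) (simp_all add: ac_simps less_imp_le s(3))
    also have "\<dots> < a * \<rho> * (s j * t ^ j)"
      using 2 s(2,3) a by simp
    finally have "e j * t ^ j = a * \<rho> * (s j * t ^ j)"
      using coeff[of j] by (simp add: thadd_less_left)
    also have "\<dots> = a * (max t \<rho> * M)"
      using 2 s(2) by simp
    finally show ?thesis by (rule that)
  qed
qed

lemma trop_factored_thprod_tlinear:
  assumes s: "trop_factored s c R" and q: "tlinear q" and e: "e \<in> thprod s q"
  shows "trop_factored e (c * q 1) (add_mset (troot q) R)"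
proof -
  define \<rho> where "\<rho> = troot q"
  have q1: "0 < q 1" and \<rho>: "0 \<le> \<rho>"
    using q tpoly_nonneg[of q 0] by (auto simp: tlinear_def \<rho>_def troot_def)
  have s_nonneg: "0 \<le> s j" and c: "0 < c" for j
    using s by (simp_all add: trop_factored_def)
  have "q 0 = q 1 * \<rho>" using q1 by (simp add: \<rho>_def troot_def)
  then have e_coeff: "e i \<in> thadd (tshift s i * q 1) (s i * (q 1 * \<rho>))" and e_nonneg: "0 \<le> e i" for i
    using e thprod_tlinear[OF q s_nonneg] by (auto simp: tpoly_nonneg)
  have bound: "s j * t ^ j \<le> c * root_prod R t" if "0 < t" for j t
    using s that by (simp add: trop_factored_def)
  have target: "c * q 1 * root_prod (add_mset \<rho> R) t = q 1 * (max t \<rho> * (c * root_prod R t))" for t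
    by (simp add: ac_simps)
  show ?thesis
    unfolding trop_factored_def target \<rho>_def[symmetric]
  proof (intro conjI allI impI)
    fix j :: nat and t :: real
    show "e j * t ^ j \<le> q 1 * (max t \<rho> * (c * root_prod R t))" if "0 < t"
      using that q1 \<rho> s_nonneg bound[OF that] e_coeff by (rule tlinear_thprod_term_le)
  next
    fix t :: real
    assume t: "0 < t" "t \<notin># add_mset \<rho> R"
    then obtain j where "s j * t ^ j = c * root_prod R t"
      using s by (auto simp: trop_factored_def)
    moreover have "0 < c * root_prod R t" "\<rho> \<noteq> t"
      using c root_prod_pos[OF t(1)] t(2) by auto
    ultimately show "\<exists>j. e j * t ^ j = q 1 * (max t \<rho> * (c * root_prod R t))"
      using tlinear_thprod_term_attained[OF t(1) q1 \<rho> _ bound[OF t(1)] _ _ e_coeff] by metis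
  qed (use e_nonneg c q1 in auto)
qed

lemma trop_factored_foldl:
  assumes "\<forall>q\<in>set qs. tlinear q" "\<forall>s\<in>S. trop_factored s c R"
    and "p \<in> foldl (\<lambda>S r. \<Union>s\<in>S. thprod s r) S qs"
  shows "trop_factored p (c * prod_list (map (\<lambda>q. q 1) qs)) (R + mset (map troot qs))"
  using assms
proof (induction qs arbitrary: S c R)
  case (Cons q qs)
  let ?S = "\<Union>s\<in>S. thprod s q"
  have "\<forall>e\<in>?S. trop_factored e (c * q 1) (add_mset (troot q) R)"
    using Cons.prems(1,2) trop_factored_thprod_tlinear by auto
  then have "trop_factored p (c * q 1 * prod_list (map (\<lambda>q. q 1) qs)) (add_mset (troot q) R + mset (map troot qs))"
    using Cons.IH[of ?S "c * q 1" "add_mset (troot q) R"] Cons.prems(1,3) by simp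
  then show ?case by (simp add: mult.assoc)
qed simp

lemma trop_factored_thprod_list:
  assumes "\<forall>q\<in>set qs. tlinear q" "p \<in> thprod_list qs"
  shows "trop_factored p (prod_list (map (\<lambda>q. q 1) qs)) (mset (map troot qs))"
proof (cases qs)
  case Nil
  then show ?thesis using assms(2) trop_factored_tconst_1 by simp
next
  case (Cons q qs')
  have "thprod (tconst 1) q = {q}"
    using assms(1) Cons thprod_tconst_left[of q 1] by (simp add: tlinear_def)
  then have "p \<in> foldl (\<lambda>S r. \<Union>s\<in>S. thprod s r) {tconst 1} qs"
    using assms(2) Cons by simp
  then show ?thesis
    using trop_factored_foldl[OF assms(1), of "{tconst 1}" 1 "{#}"] trop_factored_tconst_1 by simp
qed

lemma exists_between_notin:
  assumes "(a::real) < b" "finite F"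
  obtains t where "a < t" "t < b" "t \<notin> F"
proof -
  have "infinite ({a<..<b} - F)" using assms by (simp add: Diff_infinite_finite)
  then obtain t where "t \<in> {a<..<b} - F" by (metis finite.emptyI ex_in_conv)
  then show ?thesis by (intro that) auto
qed

text \<open>Beyond all roots both sides are monomials in \<open>t\<close>; compare them at two points.\<close>
lemma root_prod_eq_imp_size_eq:
  assumes F: "finite F" and c: "0 < c" "0 < c'"
    and eq: "\<And>t. 0 < t \<Longrightarrow> t \<notin> F \<Longrightarrow> c * root_prod R t = c' * root_prod R' t"
  shows "size R = size R'" and "c = c'"
proof -
  define T where "T = Max (insert 1 (set_mset R \<union> set_mset R'))"
  have T: "1 \<le> T" "\<forall>\<rho>\<in>#R. \<rho> \<le> T" "\<forall>\<rho>\<in>#R'. \<rho> \<le> T" by (simp_all add: T_def)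
  obtain t1 where t1: "T < t1" "t1 < T + 1" "t1 \<notin> F"
    using exists_between_notin[OF _ F, of T "T + 1"] by auto
  obtain t2 where t2: "T + 1 < t2" "t2 \<notin> F"
    using exists_between_notin[OF _ F, of "T + 1" "T + 2"] by auto
  have t: "T < t1" "t1 < t2" "t1 \<notin> F" "t2 \<notin> F" using t1 t2 by auto
  have monomial: "c * t ^ size R = c' * t ^ size R'" if "T < t" "t \<notin> F" for t
    using eq[of t] that T root_prod_above_roots[of R t] root_prod_above_roots[of R' t] by force
  have "t1 ^ size R * t2 ^ size R' = t1 ^ size R' * t2 ^ size R"
  proof -
    have "(c * t1 ^ size R) * (c' * t2 ^ size R') = (c' * t1 ^ size R') * (c * t2 ^ size R)"
      using monomial[of t1] monomial[of t2] t by simp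
    then show ?thesis using c by (simp add: ac_simps)
  qed
  then have "(t2 / t1) ^ size R = (t2 / t1) ^ size R'"
    using t T by (simp add: power_divide field_simps)
  moreover have "1 < t2 / t1" using t T by simp
  ultimately show size: "size R = size R'" by simp
  show "c = c'" using monomial[of t1] t T size by simp
qed

lemma max_root_mem:
  assumes \<rho>: "\<rho> \<in># R" and R': "\<forall>x\<in>#R'. 0 \<le> x \<and> x \<le> \<rho>" "R' \<noteq> {#}"
    and size: "size R = size R'" and F: "finite F"
    and eq: "\<And>t. 0 < t \<Longrightarrow> t \<notin> F \<Longrightarrow> root_prod R t = root_prod R' t"
  shows "\<rho> \<in># R'"
proof (rule ccontr)
  assume \<rho>_notin: "\<rho> \<notin># R'"
  define \<alpha> where "\<alpha> = Max (set_mset R')"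
  have "\<alpha> \<in># R'" unfolding \<alpha>_def using R'(2) by (simp add: Max_in)
  then have \<alpha>: "0 \<le> \<alpha>" "\<alpha> < \<rho>" using R'(1) \<rho>_notin by (auto simp: order_le_less)
  obtain t where t: "\<alpha> < t" "t < \<rho>" "t \<notin> F" using exists_between_notin[OF \<alpha>(2) F] .
  obtain R0 where R0: "R = add_mset \<rho> R0" using \<rho> by (metis insert_DiffM)
  have "\<forall>x\<in>#R'. x \<le> \<alpha>" by (simp add: \<alpha>_def)
  then have "root_prod R' t = t * t ^ size R0"
    using t size[symmetric] R0 by (subst root_prod_above_roots) auto
  also have "\<dots> < \<rho> * root_prod R0 t"
    using root_prod_ge_power[of t R0] t \<alpha> by (intro mult_less_le_imp_less) auto
  also have "\<dots> = root_prod R t"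
    using R0 t by (simp add: max_def)
  finally have "root_prod R' t < root_prod R t" .
  then show False using eq[of t] t \<alpha> by simp
qed

lemma root_prod_eq_imp_eq:
  assumes "size R = size R'" "\<forall>x\<in>#R. 0 \<le> x" "\<forall>x\<in>#R'. 0 \<le> x" "finite F"
    and "\<And>t. 0 < t \<Longrightarrow> t \<notin> F \<Longrightarrow> root_prod R t = root_prod R' t"
  shows "R = R'"
  using assms
proof (induction "size R" arbitrary: R R')
  case (Suc n)
  define \<rho> where "\<rho> = Max (set_mset R \<union> set_mset R')"
  have nonempty: "R \<noteq> {#}" "R' \<noteq> {#}" using Suc.hyps(2) Suc.prems(1) by auto
  then have "\<rho> \<in># R \<or> \<rho> \<in># R'" using Max_in[of "set_mset R \<union> set_mset R'"] by (auto simp: \<rho>_def)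
  moreover have "x \<le> \<rho>" if "x \<in># R \<or> x \<in># R'" for x using that by (auto simp: \<rho>_def)
  ultimately have "\<rho> \<in># R" "\<rho> \<in># R'"
    using max_root_mem[of \<rho> R R' F] max_root_mem[of \<rho> R' R F] nonempty Suc.prems by auto
  then obtain R0 R0' where R0: "R = add_mset \<rho> R0" "R' = add_mset \<rho> R0'"
    by (metis insert_DiffM)
  have "root_prod R0 t = root_prod R0' t" if "0 < t" "t \<notin> F" for t
  proof -
    have "max t \<rho> * root_prod R0 t = max t \<rho> * root_prod R0' t"
      using Suc.prems(5)[OF that] R0 by simp
    moreover have "0 < max t \<rho>" using \<open>0 < t\<close> by simp
    ultimately show ?thesis by simp
  qed
  then have "R0 = R0'"
    using Suc.hyps(1)[of R0 R0'] Suc.hyps(2) Suc.prems(1-4) R0 by simp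
  then show ?case using R0 by simp
qed simp

lemma trop_factored_unique:
  assumes p: "trop_factored p c R" "trop_factored p c' R'"
    and nonneg: "\<forall>x\<in>#R. 0 \<le> x" "\<forall>x\<in>#R'. 0 \<le> x"
  shows "R = R'"
proof -
  define F where "F = set_mset R \<union> set_mset R'"
  have c: "0 < c" "0 < c'" using p by (simp_all add: trop_factored_def)
  have eq: "c * root_prod R t = c' * root_prod R' t" if t: "0 < t" "t \<notin> F" for t
  proof (rule antisym)
    obtain j where "c * root_prod R t = p j * t ^ j"
      using p(1) t unfolding trop_factored_def F_def by (metis UnCI)
    also have "\<dots> \<le> c' * root_prod R' t"
      using p(2) t by (simp add: trop_factored_def)
    finally show "c * root_prod R t \<le> c' * root_prod R' t" .
    obtain j' where "c' * root_prod R' t = p j' * t ^ j'"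
      using p(2) t unfolding trop_factored_def F_def by (metis UnCI)
    also have "\<dots> \<le> c * root_prod R t"
      using p(1) t by (simp add: trop_factored_def)
    finally show "c' * root_prod R' t \<le> c * root_prod R t" .
  qed
  have F: "finite F" by (simp add: F_def)
  note size = root_prod_eq_imp_size_eq[OF F c eq]
  have "root_prod R t = root_prod R' t" if "0 < t" "t \<notin> F" for t
    using eq[OF that] c size(2) by simp
  then show ?thesis using root_prod_eq_imp_eq[OF size(1) nonneg F] by blast
qed

lemma tassoc_if_troot_eq:
  assumes q: "tlinear q" "tlinear q'" and root: "troot q = troot q'"
  shows "tassoc q q'"
proof (rule tassocI)
  have pos: "0 < q 1" "0 < q' 1" using q by (simp_all add: tlinear_def)
  show "tpoly q'" "0 < q 1 / q' 1" using q pos by (simp_all add: tlinear_def)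
  have "q i = q 1 / q' 1 * q' i" for i
  proof -
    consider "i = 0" | "i = 1" | "2 \<le> i" by linarith
    then show ?thesis
      using q root pos by cases (auto simp: tlinear_def troot_def field_simps)
  qed
  then show "q = (\<lambda>i. q 1 / q' 1 * q' i)" by blast
qed

lemma tassoc_permutation:
  assumes "\<forall>q\<in>set qs. tlinear q" "\<forall>q\<in>set qs'. tlinear q"
    and "mset (map troot qs) = mset (map troot qs')"
  shows "length qs = length qs' \<and>
    (\<exists>\<sigma>. bij_betw \<sigma> {..<length qs} {..<length qs} \<and> (\<forall>i<length qs. tassoc (qs ! i) (qs' ! \<sigma> i)))"
proof -
  have len: "length qs = length qs'" using mset_eq_length[OF assms(3)] by simp
  obtain \<sigma> where \<sigma>: "bij_betw \<sigma> {..<length qs} {..<length qs}"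
    "\<forall>i<length qs. map troot qs ! i = map troot qs' ! \<sigma> i"
    using permutation_Ex_bij[OF assms(3)] len by auto
  have "tassoc (qs ! i) (qs' ! \<sigma> i)" if i: "i < length qs" for i
  proof -
    have "\<sigma> i < length qs'" using \<sigma>(1) i len by (auto dest: bij_betwE)
    then show ?thesis
      using \<sigma>(2) i assms(1,2) by (intro tassoc_if_troot_eq) auto
  qed
  then show ?thesis using len \<sigma>(1) by blast
qed

theorem mainTheorem5:
  shows "(\<forall>p. tpoly p \<longrightarrow> (tirred p \<longleftrightarrow> tdeg p = 1)) \<and>
    (\<forall>p qs qs'. qs \<noteq> [] \<longrightarrow> qs' \<noteq> [] \<longrightarrow>
       (\<forall>q\<in>set qs. tirred q) \<longrightarrow> (\<forall>q\<in>set qs'. tirred q) \<longrightarrow>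
       p \<in> thprod_list qs \<longrightarrow> p \<in> thprod_list qs' \<longrightarrow>
       length qs = length qs' \<and>
       (\<exists>\<sigma>. bij_betw \<sigma> {..<length qs} {..<length qs} \<and>
            (\<forall>i<length qs. tassoc (qs ! i) (qs' ! \<sigma> i))))"
proof (intro conjI allI impI)
  fix p :: "nat \<Rightarrow> real"
  assume "tpoly p"
  then show "tirred p \<longleftrightarrow> tdeg p = 1" by (rule tirred_iff_tdeg_1)
next
  fix p qs qs'
  assume "qs \<noteq> []" "qs' \<noteq> []" and irred: "\<forall>q\<in>set qs. tirred q" "\<forall>q\<in>set qs'. tirred q"
    and p: "p \<in> thprod_list qs" "p \<in> thprod_list qs'"
  have linear: "\<forall>q\<in>set qs. tlinear q" "\<forall>q\<in>set qs'. tlinear q"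
    using irred tdeg_1_if_tirred tlinear_iff_tdeg_1 by (auto simp: tirred_def)
  have troot_nonneg: "0 \<le> troot q" if "tlinear q" for q
    using that tpoly_nonneg[of q 0] by (simp add: tlinear_def troot_def)
  have "mset (map troot qs) = mset (map troot qs')"
    using trop_factored_unique[OF trop_factored_thprod_list[OF linear(1) p(1)]
        trop_factored_thprod_list[OF linear(2) p(2)]] linear troot_nonneg by auto
  then show "length qs = length qs'"
    and "\<exists>\<sigma>. bij_betw \<sigma> {..<length qs} {..<length qs} \<and> (\<forall>i<length qs. tassoc (qs ! i) (qs' ! \<sigma> i))"
    using tassoc_permutation[OF linear] by blast+
qed

end
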